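(* Let $\mathfrak{P}=(\rho_{t_0},\mathcal{E}_{t_1\leftarrow t_0},\dots,\mathcal{E}_{t_n\leftarrow t_{n-1}})$ be a multi-time quantum process with $\mathcal{H}_{t_k}=\mathbb{C}^d$, and let $\overrightarrow{\Upsilon}_{t_k\cdots t_0}$ denote the right KD temporal state of the process truncated at time $t_k$. Then $\overrightarrow{\Upsilon}_{t_0}=\rho_{t_0}$ and, for $k=1,\dots,n$, $$\overrightarrow{\Upsilon}_{t_k\cdots t_0}=J[\mathcal{E}_{t_k\leftarrow t_{k-1}}]\star\overrightarrow{\Upsilon}_{t_{k-1}\cdots t_0};$$ that is, $\overrightarrow{\Upsilon}_{t_n\cdots t_0}=J[\mathcal{E}_{t_n\leftarrow t_{n-1}}]\star(\cdots\star(J[\mathcal{E}_{t_1\leftarrow t_0}]\star\rho_{t_0})\cdots)$.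
   Context: A multi-time quantum process consists of a density operator $\rho_{t_0}$ on $\mathbb{C}^d$ and CPTP maps $\mathcal{E}_{t_j\leftarrow t_{j-1}}$ on $\mathbf{B}(\mathbb{C}^d)$, extended linearly to all operators. For complete families of orthogonal projectors at each time, the right temporal KD distribution is $\overrightarrow{Q}_{\rm KD}(b_n,\dots,b_0)=\operatorname{Tr}[\mathcal{E}_{t_n\leftarrow t_{n-1}}(\cdots\mathcal{E}_{t_1\leftarrow t_0}(\rho_{t_0}\Pi^{t_0}_{b_0})\Pi^{t_1}_{b_1}\cdots)\Pi^{t_n}_{b_n}]$. Let $\sigma_0=\mathbb{I},\sigma_1,\dots,\sigma_{d^2-1}$ be Hermitian operators on $\mathbb{C}^d$ with $\operatorname{Tr}\sigma_j=0$ ($j\ge1$) and $\operatorname{Tr}(\sigma_\mu\sigma_\nu)=d\,\delta_{\mu\nu}$; measuring each $\sigma_\mu$ via its spectral projectors with eigenvalue outcomes, set $\overrightarrow{T}^{\mu_n,\dots,\mu_0}=\sum a_n\cdots a_0\,\overrightarrow{Q}_{\rm KD}(a_n,\dots,a_0\mid\sigma_{\mu_n},\dots,\sigma_{\mu_0})$ and define the right KD temporal state $\overrightarrow{\Upsilon}_{t_n\cdots t_0}=d^{-(n+1)}\sum_\mu\overrightarrow{T}^{\mu_n,\dots,\mu_0}\sigma_{\mu_n}\otimes\cdots\otimes\sigma_{\mu_0}$ on $\mathcal{H}_{t_n}\otimes\cdots\otimes\mathcal{H}_{t_0}$. For $M\in\mathbf{B}(\mathcal{H}_B\otimes\mathcal{H}_A)$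 and $N\in\mathbf{B}(\mathcal{H}_C\otimes\mathcal{H}_B)$, $N\star M:=(N_{CB}\otimes\mathbb{I}_A)(\mathbb{I}_C\otimes M_{BA})$ (with $\mathcal{H}_A$ possibly trivial, so $N\star\rho=N(\mathbb{I}_C\otimes\rho)$ for $\rho\in\mathbf{B}(\mathcal{H}_B)$). The Jamiołkowski operator of a channel $\mathcal{E}:\mathbf{B}(\mathcal{H}_{t_{i-1}})\to\mathbf{B}(\mathcal{H}_{t_i})$ is $J[\mathcal{E}]=\sum_{k,l}\mathcal{E}(|k\rangle\langle l|)\otimes|l\rangle\langle k|\in\mathbf{B}(\mathcal{H}_{t_i}\otimes\mathcal{H}_{t_{i-1}})$. *)

theory Defs
  imports "Jordan_Normal_Form.Matrix"
begin

definition mtrace :: "complex mat \<Rightarrow> complex" where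
  "mtrace A = (\<Sum>i<dim_row A. A $$ (i,i))"

definition adj :: "complex mat \<Rightarrow> complex mat" where
  "adj A = mat (dim_col A) (dim_row A) (\<lambda>(i,j). cnj (A $$ (j,i)))"

definition hermitian :: "nat \<Rightarrow> complex mat \<Rightarrow> bool" where
  "hermitian n A \<longleftrightarrow> A \<in> carrier_mat n n \<and> adj A = A"

definition psd :: "nat \<Rightarrow> complex mat \<Rightarrow> bool" where
  "psd n A \<longleftrightarrow> A \<in> carrier_mat n n \<and>
     (\<forall>v \<in> carrier_vec n. Im (conjugate v \<bullet> (A *\<^sub>v v)) = 0 \<and> Re (conjugate v \<bullet> (A *\<^sub>v v)) \<ge> 0)"

definition density_op :: "nat \<Rightarrow> complex mat \<Rightarrow> bool" where
  "density_op d \<rho> \<longleftrightarrow> psd d \<rho> \<and> mtrace \<rho> = 1"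

text \<open>Kronecker (tensor) product; the first factor is the most significant index.\<close>
definition kron :: "complex mat \<Rightarrow> complex mat \<Rightarrow> complex mat" where
  "kron A B = mat (dim_row A * dim_row B) (dim_col A * dim_col B)
     (\<lambda>(i,j). A $$ (i div dim_row B, j div dim_col B) * B $$ (i mod dim_row B, j mod dim_col B))"

fun tens :: "nat \<Rightarrow> (nat \<Rightarrow> complex mat) \<Rightarrow> complex mat" where
  "tens 0 f = f 0"
| "tens (Suc k) f = kron (f (Suc k)) (tens k f)"

definition linear_op_map :: "nat \<Rightarrow> (complex mat \<Rightarrow> complex mat) \<Rightarrow> bool" where
  "linear_op_map d E \<longleftrightarrow>
     (\<forall>A \<in> carrier_mat d d. E A \<in> carrier_mat d d) \<and>
     (\<forall>A \<in> carrier_mat d d. \<forall>B \<in> carrier_mat d d. E (A + B) = E A + E B) \<and>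
     (\<forall>A \<in> carrier_mat d d. \<forall>c. E (c \<cdot>\<^sub>m A) = c \<cdot>\<^sub>m E A)"

text \<open>(id_m \<otimes> E) acting on B(C^m \<otimes> C^d), blockwise.\<close>
definition ampliate :: "nat \<Rightarrow> nat \<Rightarrow> (complex mat \<Rightarrow> complex mat) \<Rightarrow> complex mat \<Rightarrow> complex mat" where
  "ampliate m d E X = mat (m*d) (m*d)
     (\<lambda>(i,j). E (mat d d (\<lambda>(r,s). X $$ ((i div d)*d + r, (j div d)*d + s))) $$ (i mod d, j mod d))"

definition completely_positive :: "nat \<Rightarrow> (complex mat \<Rightarrow> complex mat) \<Rightarrow> bool" where
  "completely_positive d E \<longleftrightarrow>
     (\<forall>m X. psd (m*d) X \<longrightarrow> psd (m*d) (ampliate m d E X))"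

definition trace_preserving :: "nat \<Rightarrow> (complex mat \<Rightarrow> complex mat) \<Rightarrow> bool" where
  "trace_preserving d E \<longleftrightarrow> (\<forall>A \<in> carrier_mat d d. mtrace (E A) = mtrace A)"

definition cptp :: "nat \<Rightarrow> (complex mat \<Rightarrow> complex mat) \<Rightarrow> bool" where
  "cptp d E \<longleftrightarrow> linear_op_map d E \<and> completely_positive d E \<and> trace_preserving d E"

definition ket_bra :: "nat \<Rightarrow> nat \<Rightarrow> nat \<Rightarrow> complex mat" where
  "ket_bra d k l = mat d d (\<lambda>(i,j). if i = k \<and> j = l then 1 else 0)"

definition jamiolkowski :: "nat \<Rightarrow> (complex mat \<Rightarrow> complex mat) \<Rightarrow> complex mat" where
  "jamiolkowski d E = mat (d*d) (d*d)
     (\<lambda>(i,j). \<Sum>k<d. \<Sum>l<d. kron (E (ket_bra d k l)) (ket_bra d l k) $$ (i,j))"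

text \<open>N \<star> M = (N_CB \<otimes> I_A)(I_C \<otimes> M_BA), where dB = dim H_B.\<close>
definition star :: "nat \<Rightarrow> complex mat \<Rightarrow> complex mat \<Rightarrow> complex mat" where
  "star dB N M = kron N (1\<^sub>m (dim_row M div dB)) * kron (1\<^sub>m (dim_row N div dB)) M"

definition spectral_decomp :: "nat \<Rightarrow> complex mat \<Rightarrow> real set \<Rightarrow> (real \<Rightarrow> complex mat) \<Rightarrow> bool" where
  "spectral_decomp d S A P \<longleftrightarrow> finite A \<and>
     (\<forall>a \<in> A. hermitian d (P a) \<and> P a * P a = P a \<and> P a \<noteq> 0\<^sub>m d d) \<and>
     (\<forall>a \<in> A. \<forall>b \<in> A. a \<noteq> b \<longrightarrow> P a * P b = 0\<^sub>m d d) \<and>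
     (\<forall>i<d. \<forall>j<d. (\<Sum>a\<in>A. P a $$ (i,j)) = (1\<^sub>m d :: complex mat) $$ (i,j)) \<and>
     (\<forall>i<d. \<forall>j<d. (\<Sum>a\<in>A. complex_of_real a * P a $$ (i,j)) = S $$ (i,j))"

text \<open>E j is the channel E_{t_j <- t_{j-1}} (j \<ge> 1); Prj j is the projector chosen at time t_j.
  kd_chain \<rho> E Prj k = E_k( ... E_1(\<rho> Pi_0) Pi_1 ...) Pi_k.\<close>
fun kd_chain :: "complex mat \<Rightarrow> (nat \<Rightarrow> complex mat \<Rightarrow> complex mat) \<Rightarrow> (nat \<Rightarrow> complex mat) \<Rightarrow> nat \<Rightarrow> complex mat" where
  "kd_chain \<rho> E Prj 0 = \<rho> * Prj 0"
| "kd_chain \<rho> E Prj (Suc k) = E (Suc k) (kd_chain \<rho> E Prj k) * Prj (Suc k)"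

definition kd_right :: "complex mat \<Rightarrow> (nat \<Rightarrow> complex mat \<Rightarrow> complex mat) \<Rightarrow> (nat \<Rightarrow> 'b \<Rightarrow> complex mat)
    \<Rightarrow> nat \<Rightarrow> (nat \<Rightarrow> 'b) \<Rightarrow> complex" where
  "kd_right \<rho> E Proj k b = mtrace (kd_chain \<rho> E (\<lambda>j. Proj j (b j)) k)"

text \<open>T^{mu_k,...,mu_0}: sum over eigenvalue outcomes a_j of sigma_{mu_j}.
  Spec mu / SP mu give the spectral decomposition of sigma_mu.\<close>
definition kd_T :: "complex mat \<Rightarrow> (nat \<Rightarrow> complex mat \<Rightarrow> complex mat) \<Rightarrow> (nat \<Rightarrow> real set)
    \<Rightarrow> (nat \<Rightarrow> real \<Rightarrow> complex mat) \<Rightarrow> nat \<Rightarrow> (nat \<Rightarrow> nat) \<Rightarrow> complex" where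
  "kd_T \<rho> E Spec SP k \<mu> =
     (\<Sum>a \<in> PiE {..k} (\<lambda>j. Spec (\<mu> j)).
        (\<Prod>j\<le>k. complex_of_real (a j)) * kd_right \<rho> E (\<lambda>j. SP (\<mu> j)) k a)"

text \<open>Right KD temporal state of the process truncated at t_k, on H_{t_k} \<otimes> ... \<otimes> H_{t_0}.\<close>
definition kd_state :: "nat \<Rightarrow> (nat \<Rightarrow> complex mat) \<Rightarrow> complex mat \<Rightarrow> (nat \<Rightarrow> complex mat \<Rightarrow> complex mat)
    \<Rightarrow> (nat \<Rightarrow> real set) \<Rightarrow> (nat \<Rightarrow> real \<Rightarrow> complex mat) \<Rightarrow> nat \<Rightarrow> complex mat" where
  "kd_state d \<sigma> \<rho> E Spec SP k = mat (d^(k+1)) (d^(k+1)) (\<lambda>(i,j).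
     (\<Sum>\<mu> \<in> PiE {..k} (\<lambda>_. {..<d^2}).
        kd_T \<rho> E Spec SP k \<mu> * tens k (\<lambda>j. \<sigma> (\<mu> j)) $$ (i,j)) / of_nat (d^(k+1)))"

definition herm_op_basis :: "nat \<Rightarrow> (nat \<Rightarrow> complex mat) \<Rightarrow> bool" where
  "herm_op_basis d \<sigma> \<longleftrightarrow> \<sigma> 0 = 1\<^sub>m d \<and>
     (\<forall>\<mu> < d^2. hermitian d (\<sigma> \<mu>)) \<and>
     (\<forall>j. 1 \<le> j \<and> j < d^2 \<longrightarrow> mtrace (\<sigma> j) = 0) \<and>
     (\<forall>\<mu> < d^2. \<forall>\<nu> < d^2. mtrace (\<sigma> \<mu> * \<sigma> \<nu>) = of_nat d * (if \<mu> = \<nu> then 1 else 0))"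

end

theory Submission
  imports Defs "Jordan_Normal_Form.Determinant"
begin

(* The (I, K) entry of the KD temporal state is d^-(k+1) Sum_mu T^mu (sigma_mu_k (x) ... (x)
   sigma_mu_0)_(I,K), and the KD quasi-probabilities behind T^mu are multilinear in the operators
   measured at the times t_j.  Expanding each sigma_mu_j in its spectral decomposition undoes the sum
   over eigenvalue outcomes, so T^mu is the trace of the KD chain
   E_k(... E_1(rho sigma_mu_0) sigma_mu_1 ...) sigma_mu_k; the completeness relation
   Sum_nu (sigma_nu)_(x,y) (sigma_nu)_(a,b) = d [x = b] [y = a] of the operator basis then undoes the
   sum over mu.  So the entry is the trace of the same chain with sigma_mu_j replaced by the matrix
   unit |K_j><I_j|, where I_j and K_j are the base-d digits of I and K.  In this form the recursion
   is an index computation: E_k applied to a matrix unit is read off from J[E_k], the chain before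
   E_k is an entry of the state at time t_(k-1), and summing over the index shared by the two is the
   contraction performed by the star product. *)

section \<open>Base-d digits and Kronecker products\<close>

lemma sum_lessThan_mult: "(\<Sum>L<(a::nat)*b. f L) = (\<Sum>i<a. \<Sum>j<b. f (i*b+j))"
proof -
  have "sum f {i*b..<i*b+b} = (\<Sum>j<b. f (i*b+j))" for i
    using sum.shift_bounds_nat_ivl[of f 0 "i*b" b] by (simp add: lessThan_atLeast0 add.commute)
  then show ?thesis by (simp flip: sum.nat_group)
qed

lemma add_mult_less_mult: "(u::nat) < d \<Longrightarrow> v < D \<Longrightarrow> u*D + v < d*D"
  using mult_le_mono1[of "Suc u" d D] by simp

definition digit :: "nat \<Rightarrow> nat \<Rightarrow> nat \<Rightarrow> nat" where
  "digit d j I = I div d ^ j mod d"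

lemma digit_less: "0 < d \<Longrightarrow> digit d j I < d"
  by (simp add: digit_def)

lemma digit_mod_power:
  assumes "j < m" "0 < d"
  shows "digit d j (I mod d ^ m) = digit d j I"
proof -
  have "d ^ m = d ^ j * d ^ (m - j)" using assms by (simp flip: power_add)
  then have "I mod d ^ m div d ^ j = I div d ^ j mod d ^ (m - j)"
    using assms by (simp add: mod_mult2_eq div_less)
  moreover have "d dvd d ^ (m - j)" using assms by simp
  ultimately show ?thesis by (simp add: digit_def mod_mod_cancel)
qed

lemma digit_add_mult_power:
  assumes "j < m" "0 < d" "t < d ^ m"
  shows "digit d j (l * d ^ m + t) = digit d j t"
proof -
  obtain r where r: "m = Suc (j + r)" using assms(1) less_iff_Suc_add by auto
  have e: "l * d ^ m = (l * d ^ r * d) * d ^ j" unfolding r by (simp add: power_add mult_ac)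
  have "(l * d ^ m + t) div d ^ j = l * d ^ r * d + t div d ^ j" unfolding e using assms by simp
  then show ?thesis by (simp add: digit_def)
qed

lemma digit_add_mult_power_top: "t < d ^ m \<Longrightarrow> l < d \<Longrightarrow> digit d m (l * d ^ m + t) = l"
  by (simp add: digit_def)

lemma digit_top: "I < d ^ Suc k \<Longrightarrow> digit d k I = I div d ^ k"
  by (simp add: digit_def less_mult_imp_div_less mult.commute)

lemma index_kron:
  "i < dim_row A * dim_row B \<Longrightarrow> j < dim_col A * dim_col B \<Longrightarrow>
   kron A B $$ (i, j) = A $$ (i div dim_row B, j div dim_col B) * B $$ (i mod dim_row B, j mod dim_col B)"
  by (simp add: kron_def)

lemma index_kron_one_right:
  assumes "A \<in> carrier_mat m m" "i < m * n" "j < m * n"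
  shows "kron A (1\<^sub>m n) $$ (i, j) = A $$ (i div n, j div n) * (if i mod n = j mod n then 1 else 0)"
proof -
  have "0 < n" using assms(2) by (cases n) auto
  then show ?thesis using assms by (simp add: kron_def)
qed

lemma index_kron_one_left:
  assumes "B \<in> carrier_mat n n" "i < m * n" "j < m * n"
  shows "kron (1\<^sub>m m) B $$ (i, j) = (if i div n = j div n then 1 else 0) * B $$ (i mod n, j mod n)"
  using assms by (simp add: kron_def less_mult_imp_div_less)

lemma tens_carrier:
  "(\<And>j. j \<le> k \<Longrightarrow> f j \<in> carrier_mat d d) \<Longrightarrow> tens k f \<in> carrier_mat (d ^ Suc k) (d ^ Suc k)"
proof (induct k)
  case (Suc k)
  then have "f (Suc k) \<in> carrier_mat d d" "tens k f \<in> carrier_mat (d ^ Suc k) (d ^ Suc k)" by auto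
  then show ?case by (simp add: kron_def)
qed simp

lemma index_tens:
  assumes "\<And>j. j \<le> k \<Longrightarrow> f j \<in> carrier_mat d d" "I < d ^ Suc k" "J < d ^ Suc k"
  shows "tens k f $$ (I, J) = (\<Prod>j\<le>k. f j $$ (digit d j I, digit d j J))"
  using assms
proof (induct k arbitrary: I J)
  case 0
  then show ?case by (simp add: digit_def)
next
  case (Suc k)
  have d0: "0 < d" using Suc.prems(2) by (cases d) auto
  have car: "f (Suc k) \<in> carrier_mat d d" "tens k f \<in> carrier_mat (d ^ Suc k) (d ^ Suc k)"
    using Suc.prems(1) tens_carrier[of k f d] by auto
  have "tens (Suc k) f $$ (I, J) = f (Suc k) $$ (I div d ^ Suc k, J div d ^ Suc k)
      * tens k f $$ (I mod d ^ Suc k, J mod d ^ Suc k)"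
    using Suc.prems(2,3) car by (simp add: index_kron)
  also have "tens k f $$ (I mod d ^ Suc k, J mod d ^ Suc k)
      = (\<Prod>j\<le>k. f j $$ (digit d j (I mod d ^ Suc k), digit d j (J mod d ^ Suc k)))"
    using Suc.hyps[of "I mod d ^ Suc k" "J mod d ^ Suc k"] Suc.prems(1) d0 by simp
  also have "\<dots> = (\<Prod>j\<le>k. f j $$ (digit d j I, digit d j J))"
    using d0 digit_mod_power[of _ "Suc k" d] by (intro prod.cong refl) (simp del: power_Suc)
  finally show ?case
    using Suc.prems(2,3) by (simp add: digit_top mult.commute)
qed

lemma ket_bra_carrier [simp]: "ket_bra d a b \<in> carrier_mat d d"
  by (simp add: ket_bra_def)

lemma dim_ket_bra [simp]: "dim_row (ket_bra d a b) = d" "dim_col (ket_bra d a b) = d"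
  by (simp_all add: ket_bra_def)

lemma index_ket_bra [simp]: "i < d \<Longrightarrow> j < d \<Longrightarrow> ket_bra d a b $$ (i, j) = (if i = a \<and> j = b then 1 else 0)"
  by (simp add: ket_bra_def)

lemma mtrace_add: "A \<in> carrier_mat d d \<Longrightarrow> B \<in> carrier_mat d d \<Longrightarrow> mtrace (A + B) = mtrace A + mtrace B"
  by (simp add: mtrace_def sum.distrib)

lemma mtrace_smult: "A \<in> carrier_mat d d \<Longrightarrow> mtrace (c \<cdot>\<^sub>m A) = c * mtrace A"
  unfolding mtrace_def sum_distrib_left by (intro sum.cong) auto

lemma mtrace_mult:
  "A \<in> carrier_mat d d \<Longrightarrow> B \<in> carrier_mat d d \<Longrightarrow> mtrace (A * B) = (\<Sum>i<d. \<Sum>j<d. A $$ (i, j) * B $$ (j, i))"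
  by (simp add: mtrace_def scalar_prod_def atLeast0LessThan)

lemma mtrace_mult_ket_bra:
  assumes "A \<in> carrier_mat d d" "a < d" "b < d"
  shows "mtrace (A * ket_bra d a b) = A $$ (b, a)"
proof -
  have "mtrace (A * ket_bra d a b) = (\<Sum>i<d. \<Sum>j<d. A $$ (i, j) * ket_bra d a b $$ (j, i))"
    by (rule mtrace_mult[OF assms(1) ket_bra_carrier])
  also have "\<dots> = (\<Sum>i<d. if i = b then A $$ (i, a) else 0)"
    using assms by (intro sum.cong refl) (auto simp: if_distrib cong: if_cong)
  finally show ?thesis using assms by simp
qed

lemma mult_ket_bra_eq_sum:
  assumes "P \<in> carrier_mat d d" "a < d"
  shows "P * ket_bra d a b = mat d d (\<lambda>ij. \<Sum>l<d. P $$ (l, a) * ket_bra d l b $$ ij)" (is "_ = ?R")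
proof (rule eq_matI)
  fix i j assume "i < dim_row ?R" "j < dim_col ?R"
  then have ij: "i < d" "j < d" by auto
  have "(P * ket_bra d a b) $$ (i, j) = (\<Sum>t<d. P $$ (i, t) * ket_bra d a b $$ (t, j))"
    using assms ij by (simp add: scalar_prod_def atLeast0LessThan carrier_matD)
  also have "\<dots> = (\<Sum>t<d. if t = a then (if j = b then P $$ (i, t) else 0) else 0)"
    using ij by (intro sum.cong refl) auto
  also have "\<dots> = (\<Sum>l<d. if l = i then (if j = b then P $$ (l, a) else 0) else 0)"
    using assms ij by simp
  also have "\<dots> = (\<Sum>l<d. P $$ (l, a) * ket_bra d l b $$ (i, j))"
    using ij by (intro sum.cong refl) auto
  finally show "(P * ket_bra d a b) $$ (i, j) = ?R $$ (i, j)"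
    using ij by simp
qed (use assms in auto)

lemma mat_eq_sum_ket_bra:
  assumes "X \<in> carrier_mat d d"
  shows "X = mat d d (\<lambda>ij. \<Sum>s\<in>{..<d} \<times> {..<d}. X $$ s * ket_bra d (fst s) (snd s) $$ ij)"
    (is "_ = ?R")
proof (rule eq_matI)
  fix i j assume "i < dim_row ?R" "j < dim_col ?R"
  then have ij: "i < d" "j < d" by auto
  have "(\<Sum>s\<in>{..<d} \<times> {..<d}. X $$ s * ket_bra d (fst s) (snd s) $$ (i, j))
      = (\<Sum>s\<in>{..<d} \<times> {..<d}. if s = (i, j) then X $$ s else 0)"
    using ij by (intro sum.cong) auto
  then show "X $$ (i, j) = ?R $$ (i, j)"
    using ij by simp
qed (use assms in auto)

section \<open>Linear and multilinear forms\<close>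

definition linear_form :: "nat \<Rightarrow> (complex mat \<Rightarrow> complex) \<Rightarrow> bool" where
  "linear_form d g \<longleftrightarrow>
     (\<forall>A \<in> carrier_mat d d. \<forall>B \<in> carrier_mat d d. g (A + B) = g A + g B) \<and>
     (\<forall>A \<in> carrier_mat d d. \<forall>c. g (c \<cdot>\<^sub>m A) = c * g A)"

lemma linear_form_sum:
  assumes g: "linear_form d g" and "finite S" and "\<And>s. s \<in> S \<Longrightarrow> A s \<in> carrier_mat d d"
  shows "g (mat d d (\<lambda>ij. \<Sum>s\<in>S. c s * A s $$ ij)) = (\<Sum>s\<in>S. c s * g (A s))"
  using assms(2,3)
proof (induct S rule: finite_induct)
  case empty
  have "mat d d (\<lambda>ij. \<Sum>s\<in>{}. c s * A s $$ ij) = 0 \<cdot>\<^sub>m 0\<^sub>m d d"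
    by (rule eq_matI) auto
  then show ?case using g unfolding linear_form_def by (metis mult_zero_left sum.empty zero_carrier_mat)
next
  case (insert s S)
  let ?R = "mat d d (\<lambda>ij. \<Sum>s\<in>S. c s * A s $$ ij)"
  have As: "A s \<in> carrier_mat d d" using insert.prems by simp
  have "mat d d (\<lambda>ij. \<Sum>s\<in>insert s S. c s * A s $$ ij) = c s \<cdot>\<^sub>m A s + ?R"
    using insert.hyps As by (intro eq_matI) auto
  moreover have "g (c s \<cdot>\<^sub>m A s + ?R) = c s * g (A s) + g ?R"
    using g insert.prems unfolding linear_form_def by auto
  ultimately show ?case using insert by simp
qed

lemma linear_form_mtrace: "linear_op_map d F \<Longrightarrow> linear_form d (\<lambda>A. mtrace (F A))"
  unfolding linear_form_def linear_op_map_def by (metis mtrace_add mtrace_smult)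

lemma linear_form_index: "linear_op_map d F \<Longrightarrow> i < d \<Longrightarrow> j < d \<Longrightarrow> linear_form d (\<lambda>A. F A $$ (i, j))"
  unfolding linear_form_def linear_op_map_def by auto

definition multilinear_form :: "nat \<Rightarrow> nat set \<Rightarrow> ((nat \<Rightarrow> complex mat) \<Rightarrow> complex) \<Rightarrow> bool" where
  "multilinear_form d S G \<longleftrightarrow>
     (\<forall>X Y. (\<forall>j\<in>S. X j = Y j) \<longrightarrow> G X = G Y) \<and>
     (\<forall>X. (\<forall>j\<in>S. X j \<in> carrier_mat d d) \<longrightarrow> (\<forall>j\<in>S. linear_form d (\<lambda>A. G (X(j := A)))))"

lemma multilinear_form_cong:
  "multilinear_form d S G \<Longrightarrow> (\<And>j. j \<in> S \<Longrightarrow> X j = Y j) \<Longrightarrow> G X = G Y"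
  unfolding multilinear_form_def by blast

lemma multilinear_form_linear:
  "multilinear_form d S G \<Longrightarrow> (\<And>j. j \<in> S \<Longrightarrow> X j \<in> carrier_mat d d) \<Longrightarrow> j \<in> S \<Longrightarrow>
   linear_form d (\<lambda>A. G (X(j := A)))"
  unfolding multilinear_form_def by blast

lemma multilinear_form_fix:
  assumes G: "multilinear_form d (insert s S) G" and "s \<notin> S" and B: "B \<in> carrier_mat d d"
  shows "multilinear_form d S (\<lambda>X. G (X(s := B)))"
  unfolding multilinear_form_def
proof (intro conjI allI impI ballI)
  fix X Y :: "nat \<Rightarrow> complex mat" assume "\<forall>j\<in>S. X j = Y j"
  then show "G (X(s := B)) = G (Y(s := B))" by (intro multilinear_form_cong[OF G]) auto
next
  fix X :: "nat \<Rightarrow> complex mat" and j assume X: "\<forall>j\<in>S. X j \<in> carrier_mat d d" and j: "j \<in> S"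
  have "linear_form d (\<lambda>A. G ((X(s := B))(j := A)))"
    using X B j by (intro multilinear_form_linear[OF G]) auto
  moreover have "(X(s := B))(j := A) = (X(j := A))(s := B)" for A
    using j \<open>s \<notin> S\<close> by (auto simp: fun_upd_twist)
  ultimately show "linear_form d (\<lambda>A. G ((X(j := A))(s := B)))" by simp
qed

lemma sum_PiE_insert:
  assumes "s \<notin> S"
  shows "(\<Sum>\<mu>\<in>PiE (insert s S) T. f \<mu>) = (\<Sum>\<nu>\<in>T s. \<Sum>\<mu>\<in>PiE S T. f (\<mu>(s:=\<nu>)))"
  unfolding PiE_insert_eq
  by (subst sum.reindex[OF inj_combinator[OF assms]]) (auto simp: sum.cartesian_product intro!: sum.cong)

lemma multilinear_form_sum_PiE:
  assumes "finite S" and "multilinear_form d S G"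
    and F: "\<And>j b. j \<in> S \<Longrightarrow> b \<in> B j \<Longrightarrow> F j b \<in> carrier_mat d d"
    and M: "\<And>j. j \<in> S \<Longrightarrow> M j \<in> carrier_mat d d"
    and expand: "\<And>j g. j \<in> S \<Longrightarrow> linear_form d g \<Longrightarrow> (\<Sum>b\<in>B j. c j b * g (F j b)) = g (M j)"
  shows "(\<Sum>b\<in>PiE S B. (\<Prod>j\<in>S. c j (b j)) * G (\<lambda>j. F j (b j))) = G M"
  using assms(1,2) F M expand
proof (induct S arbitrary: G rule: finite_induct)
  case empty
  have "G (\<lambda>j. F j undefined) = G M" by (rule multilinear_form_cong[OF empty.prems(1)]) simp
  then show ?case by simp
next
  case (insert s S)
  let ?FS = "\<lambda>b. \<lambda>j. F j (b j)"
  have "(\<Sum>b\<in>PiE (insert s S) B. (\<Prod>j\<in>insert s S. c j (b j)) * G (?FS b))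
      = (\<Sum>a\<in>B s. \<Sum>b\<in>PiE S B. c s a * ((\<Prod>j\<in>S. c j (b j)) * G ((?FS b)(s := F s a))))"
  proof -
    have "(\<Prod>j\<in>S. c j ((b(s := a)) j)) = (\<Prod>j\<in>S. c j (b j))" for a b
      using insert.hyps by (intro prod.cong refl) auto
    then have "(\<Prod>j\<in>insert s S. c j ((b(s := a)) j)) = c s a * (\<Prod>j\<in>S. c j (b j))" for a b
      using insert.hyps by simp
    moreover have "?FS (b(s := a)) = (?FS b)(s := F s a)" for a b
      by auto
    ultimately show ?thesis
      unfolding sum_PiE_insert[OF insert.hyps(2)] by (simp only: mult.assoc)
  qed
  also have "\<dots> = (\<Sum>a\<in>B s. c s a * G (M(s := F s a)))"
  proof (intro sum.cong refl)
    fix a assume "a \<in> B s"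
    then have "multilinear_form d S (\<lambda>X. G (X(s := F s a)))"
      using insert by (intro multilinear_form_fix) auto
    then have "(\<Sum>b\<in>PiE S B. (\<Prod>j\<in>S. c j (b j)) * G ((?FS b)(s := F s a))) = G (M(s := F s a))"
      using insert.hyps(3)[of "\<lambda>X. G (X(s := F s a))"] insert.prems by simp
    then show "(\<Sum>b\<in>PiE S B. c s a * ((\<Prod>j\<in>S. c j (b j)) * G ((?FS b)(s := F s a))))
        = c s a * G (M(s := F s a))"
      by (simp flip: sum_distrib_left)
  qed
  also have "\<dots> = G (M(s := M s))"
    using insert.prems by (intro insert.prems(4) multilinear_form_linear) auto
  finally show ?case by simp
qed

section \<open>Spectral decompositions and the operator basis\<close>

lemma linear_form_spectral_decomp:
  assumes sd: "spectral_decomp d M A P" and "M \<in> carrier_mat d d" and g: "linear_form d g"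
  shows "(\<Sum>a\<in>A. complex_of_real a * g (P a)) = g M"
proof -
  have "M = mat d d (\<lambda>ij. \<Sum>a\<in>A. complex_of_real a * P a $$ ij)"
    using sd assms(2) unfolding spectral_decomp_def by (intro eq_matI) auto
  also have "g \<dots> = (\<Sum>a\<in>A. complex_of_real a * g (P a))"
    using sd unfolding spectral_decomp_def hermitian_def by (intro linear_form_sum[OF g]) auto
  finally show ?thesis by simp
qed

lemma herm_op_basis_carrier: "herm_op_basis d \<sigma> \<Longrightarrow> \<mu> < d^2 \<Longrightarrow> \<sigma> \<mu> \<in> carrier_mat d d"
  unfolding herm_op_basis_def hermitian_def by auto

text \<open>Orthonormality says that the coefficient matrix of the basis has a right inverse;
  its being also a left inverse is the completeness relation.\<close>
lemma herm_op_basis_completeness: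
  assumes basis: "herm_op_basis d \<sigma>" and xyab: "x < d" "y < d" "a < d" "b < d"
  shows "(\<Sum>\<nu><d^2. \<sigma> \<nu> $$ (x, y) / of_nat d * \<sigma> \<nu> $$ (a, b)) = (if x = b \<and> y = a then 1 else 0)"
proof -
  have d0: "0 < d" using xyab by auto
  note car = herm_op_basis_carrier[OF basis]
  define A where "A = mat (d^2) (d^2) (\<lambda>(\<mu>, p). \<sigma> \<mu> $$ (p div d, p mod d))"
  define B where "B = mat (d^2) (d^2) (\<lambda>(p, \<nu>). \<sigma> \<nu> $$ (p mod d, p div d) / of_nat d)"
  have A: "A \<in> carrier_mat (d^2) (d^2)" and B: "B \<in> carrier_mat (d^2) (d^2)"
    unfolding A_def B_def by auto
  have "A * B = 1\<^sub>m (d^2)"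
  proof (rule eq_matI)
    fix \<mu> \<nu> assume "\<mu> < dim_row (1\<^sub>m (d^2) :: complex mat)" "\<nu> < dim_col (1\<^sub>m (d^2) :: complex mat)"
    then have \<mu>\<nu>: "\<mu> < d^2" "\<nu> < d^2" by auto
    have "(A * B) $$ (\<mu>, \<nu>) = (\<Sum>p<d*d. \<sigma> \<mu> $$ (p div d, p mod d) * (\<sigma> \<nu> $$ (p mod d, p div d) / of_nat d))"
      using \<mu>\<nu> A B by (simp add: A_def B_def scalar_prod_def atLeast0LessThan power2_eq_square)
    also have "\<dots> = mtrace (\<sigma> \<mu> * \<sigma> \<nu>) / of_nat d"
      by (simp add: sum_lessThan_mult mtrace_mult[OF car car] \<mu>\<nu> sum_divide_distrib)
    also have "\<dots> = 1\<^sub>m (d^2) $$ (\<mu>, \<nu>)"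
      using basis \<mu>\<nu> d0 unfolding herm_op_basis_def by simp
    finally show "(A * B) $$ (\<mu>, \<nu>) = 1\<^sub>m (d^2) $$ (\<mu>, \<nu>)" .
  qed (use A B in auto)
  then have BA: "B * A = 1\<^sub>m (d^2)" by (rule mat_mult_left_right_inverse[OF A B])
  have pq: "y * d + x < d^2" "a * d + b < d^2"
    using xyab add_mult_less_mult by (auto simp: power2_eq_square)
  have "(B * A) $$ (y * d + x, a * d + b) = (\<Sum>\<nu><d^2. \<sigma> \<nu> $$ (x, y) / of_nat d * \<sigma> \<nu> $$ (a, b))"
    using pq A B xyab by (simp add: A_def B_def scalar_prod_def atLeast0LessThan)
  moreover have "(y * d + x = a * d + b) \<longleftrightarrow> x = b \<and> y = a"
  proof -
    have "(y * d + x) div d = y" "(y * d + x) mod d = x" "(a * d + b) div d = a" "(a * d + b) mod d = b"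
      using xyab by simp_all
    then show ?thesis by metis
  qed
  ultimately show ?thesis using BA pq by simp
qed

lemma linear_form_herm_op_basis:
  assumes basis: "herm_op_basis d \<sigma>" and g: "linear_form d g" and xy: "x < d" "y < d"
  shows "(\<Sum>\<nu><d^2. \<sigma> \<nu> $$ (x, y) / of_nat d * g (\<sigma> \<nu>)) = g (ket_bra d y x)"
proof -
  let ?K = "\<lambda>s. ket_bra d (fst s) (snd s)"
  have "(\<Sum>\<nu><d^2. \<sigma> \<nu> $$ (x, y) / of_nat d * g (\<sigma> \<nu>))
      = (\<Sum>\<nu><d^2. \<Sum>s\<in>{..<d} \<times> {..<d}. g (?K s) * (\<sigma> \<nu> $$ (x, y) / of_nat d * \<sigma> \<nu> $$ s))"
  proof (intro sum.cong refl)
    fix \<nu> assume "\<nu> \<in> {..<d^2}"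
    then have "\<sigma> \<nu> \<in> carrier_mat d d" by (simp add: herm_op_basis_carrier[OF basis])
    then have "g (\<sigma> \<nu>) = g (mat d d (\<lambda>ij. \<Sum>s\<in>{..<d} \<times> {..<d}. \<sigma> \<nu> $$ s * ?K s $$ ij))"
      by (rule arg_cong[OF mat_eq_sum_ket_bra])
    also have "\<dots> = (\<Sum>s\<in>{..<d} \<times> {..<d}. \<sigma> \<nu> $$ s * g (?K s))"
      by (rule linear_form_sum[OF g]) auto
    finally show "\<sigma> \<nu> $$ (x, y) / of_nat d * g (\<sigma> \<nu>)
        = (\<Sum>s\<in>{..<d} \<times> {..<d}. g (?K s) * (\<sigma> \<nu> $$ (x, y) / of_nat d * \<sigma> \<nu> $$ s))"
      by (simp add: sum_distrib_left mult_ac)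
  qed
  also have "\<dots> = (\<Sum>s\<in>{..<d} \<times> {..<d}. g (?K s) * (\<Sum>\<nu><d^2. \<sigma> \<nu> $$ (x, y) / of_nat d * \<sigma> \<nu> $$ s))"
    by (subst sum.swap) (simp add: sum_distrib_left)
  also have "\<dots> = (\<Sum>s\<in>{..<d} \<times> {..<d}. if s = (y, x) then g (?K s) else 0)"
  proof (intro sum.cong refl)
    fix s assume "s \<in> {..<d} \<times> {..<d}"
    then show "g (?K s) * (\<Sum>\<nu><d^2. \<sigma> \<nu> $$ (x, y) / of_nat d * \<sigma> \<nu> $$ s) = (if s = (y, x) then g (?K s) else 0)"
      using xy by (cases s) (simp only: herm_op_basis_completeness[OF basis] mem_Sigma_iff lessThan_iff, auto)
  qed
  also have "\<dots> = g (ket_bra d y x)" using xy by (simp add: sum.delta)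
  finally show ?thesis .
qed

section \<open>KD chains\<close>

lemma linear_op_map_mult_left: "C \<in> carrier_mat d d \<Longrightarrow> linear_op_map d (\<lambda>A. C * A)"
  unfolding linear_op_map_def by (auto simp: mult_add_distrib_mat mult_smult_distrib)

lemma linear_op_map_mult_right: "C \<in> carrier_mat d d \<Longrightarrow> linear_op_map d (\<lambda>A. A * C)"
  unfolding linear_op_map_def by (auto simp: add_mult_distrib_mat mult_smult_assoc_mat)

lemma linear_op_map_comp: "linear_op_map d F \<Longrightarrow> linear_op_map d G \<Longrightarrow> linear_op_map d (\<lambda>A. F (G A))"
  unfolding linear_op_map_def by auto

lemma kd_chain_cong: "(\<And>j. j \<le> k \<Longrightarrow> X j = Y j) \<Longrightarrow> kd_chain \<rho> E X k = kd_chain \<rho> E Y k"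
  by (induct k) auto

lemma kd_chain_carrier:
  assumes "\<rho> \<in> carrier_mat d d" and "\<forall>j\<in>{1..k}. linear_op_map d (E j)"
    and "\<And>j. j \<le> k \<Longrightarrow> X j \<in> carrier_mat d d"
  shows "kd_chain \<rho> E X k \<in> carrier_mat d d"
  using assms(2,3)
proof (induct k)
  case (Suc k)
  then have "kd_chain \<rho> E X k \<in> carrier_mat d d" and "linear_op_map d (E (Suc k))" by auto
  then show ?case using Suc.prems(2) unfolding linear_op_map_def by auto
qed (use assms(1) in auto)

lemma linear_op_map_kd_chain:
  assumes \<rho>: "\<rho> \<in> carrier_mat d d" and E: "\<forall>j\<in>{1..k}. linear_op_map d (E j)"
    and X: "\<And>j. j \<le> k \<Longrightarrow> X j \<in> carrier_mat d d" and "j \<le> k"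
  shows "linear_op_map d (\<lambda>A. kd_chain \<rho> E (X(j := A)) k)"
  using E X \<open>j \<le> k\<close>
proof (induct k)
  case 0
  then show ?case using linear_op_map_mult_left[OF \<rho>] by simp
next
  case (Suc k)
  show ?case
  proof (cases "j = Suc k")
    case True
    have "kd_chain \<rho> E (X(j := A)) k = kd_chain \<rho> E X k" for A
      using True by (intro kd_chain_cong) auto
    then have eq: "(\<lambda>A. kd_chain \<rho> E (X(j := A)) (Suc k)) = (\<lambda>A. E (Suc k) (kd_chain \<rho> E X k) * A)"
      using True by simp
    have "E (Suc k) (kd_chain \<rho> E X k) \<in> carrier_mat d d"
      using Suc.prems kd_chain_carrier[OF \<rho>, of k E X] unfolding linear_op_map_def by auto
    then show ?thesis unfolding eq by (rule linear_op_map_mult_left)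
  next
    case False
    then have "linear_op_map d (\<lambda>A. kd_chain \<rho> E (X(j := A)) k)"
      using Suc.prems by (intro Suc.hyps) auto
    moreover have "linear_op_map d (E (Suc k))" and X: "X (Suc k) \<in> carrier_mat d d"
      using Suc.prems by auto
    ultimately have "linear_op_map d (\<lambda>A. E (Suc k) (kd_chain \<rho> E (X(j := A)) k) * X (Suc k))"
      using linear_op_map_comp[OF linear_op_map_mult_right[OF X]] linear_op_map_comp by blast
    moreover have "(X(j := A)) (Suc k) = X (Suc k)" for A using False by simp
    ultimately show ?thesis by (simp only: kd_chain.simps)
  qed
qed

lemma multilinear_form_mtrace_kd_chain:
  assumes "\<rho> \<in> carrier_mat d d" and "\<forall>j\<in>{1..k}. linear_op_map d (E j)"
  shows "multilinear_form d {..k} (\<lambda>X. mtrace (kd_chain \<rho> E X k))"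
  unfolding multilinear_form_def
proof (intro conjI allI impI ballI)
  fix X Y :: "nat \<Rightarrow> complex mat" assume "\<forall>j\<in>{..k}. X j = Y j"
  then show "mtrace (kd_chain \<rho> E X k) = mtrace (kd_chain \<rho> E Y k)"
    by (simp add: kd_chain_cong[of k X Y])
next
  fix X :: "nat \<Rightarrow> complex mat" and j assume "\<forall>j\<in>{..k}. X j \<in> carrier_mat d d" "j \<in> {..k}"
  then show "linear_form d (\<lambda>A. mtrace (kd_chain \<rho> E (X(j := A)) k))"
    using assms by (intro linear_form_mtrace linear_op_map_kd_chain) auto
qed

definition kd_pre :: "complex mat \<Rightarrow> (nat \<Rightarrow> complex mat \<Rightarrow> complex mat) \<Rightarrow>
    (nat \<Rightarrow> complex mat) \<Rightarrow> nat \<Rightarrow> complex mat" where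
  "kd_pre \<rho> E X m = (if m = 0 then \<rho> else E m (kd_chain \<rho> E X (m - 1)))"

lemma kd_chain_eq_kd_pre: "kd_chain \<rho> E X m = kd_pre \<rho> E X m * X m"
  by (cases m) (simp_all add: kd_pre_def)

lemma kd_pre_cong:
  assumes "\<And>j. j < m \<Longrightarrow> X j = Y j"
  shows "kd_pre \<rho> E X m = kd_pre \<rho> E Y m"
proof (cases m)
  case (Suc m')
  then have "kd_chain \<rho> E X m' = kd_chain \<rho> E Y m'" using assms by (intro kd_chain_cong) auto
  then show ?thesis using Suc by (simp add: kd_pre_def)
qed (simp add: kd_pre_def)

lemma kd_pre_carrier:
  assumes "\<rho> \<in> carrier_mat d d" and "\<forall>j\<in>{1..m}. linear_op_map d (E j)"
    and "\<And>j. j < m \<Longrightarrow> X j \<in> carrier_mat d d"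
  shows "kd_pre \<rho> E X m \<in> carrier_mat d d"
proof (cases m)
  case (Suc m')
  then have "kd_chain \<rho> E X m' \<in> carrier_mat d d"
    using assms by (intro kd_chain_carrier) auto
  moreover have "linear_op_map d (E m)" using assms(2) Suc by auto
  ultimately show ?thesis using Suc unfolding kd_pre_def linear_op_map_def by auto
qed (use assms(1) in \<open>simp add: kd_pre_def\<close>)

lemma mtrace_kd_chain_Suc_ket_bra:
  assumes F: "linear_op_map d (E (Suc m))" and P: "kd_pre \<rho> E X m \<in> carrier_mat d d"
    and X: "X m = ket_bra d a b" "X (Suc m) = ket_bra d a' b'" and "a < d" "a' < d" "b' < d"
  shows "mtrace (kd_chain \<rho> E X (Suc m))
    = (\<Sum>l<d. kd_pre \<rho> E X m $$ (l, a) * E (Suc m) (ket_bra d l b) $$ (b', a'))"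
proof -
  let ?P = "kd_pre \<rho> E X m"
  have C: "kd_chain \<rho> E X m = mat d d (\<lambda>ij. \<Sum>l<d. ?P $$ (l, a) * ket_bra d l b $$ ij)"
    unfolding kd_chain_eq_kd_pre[of \<rho> E X m] X(1) using P \<open>a < d\<close> by (rule mult_ket_bra_eq_sum)
  then have "E (Suc m) (kd_chain \<rho> E X m) \<in> carrier_mat d d"
    using F unfolding linear_op_map_def by simp
  then have "mtrace (kd_chain \<rho> E X (Suc m)) = E (Suc m) (kd_chain \<rho> E X m) $$ (b', a')"
    using assms by (simp add: mtrace_mult_ket_bra)
  also have "\<dots> = (\<Sum>l<d. ?P $$ (l, a) * E (Suc m) (ket_bra d l b) $$ (b', a'))"
    unfolding C using assms by (intro linear_form_sum[OF linear_form_index[OF F]]) auto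
  finally show ?thesis .
qed

section \<open>Entries of the KD temporal state\<close>

lemma kd_T_eq_mtrace_kd_chain:
  assumes basis: "herm_op_basis d \<sigma>" and spec: "\<forall>\<mu> < d^2. spectral_decomp d (\<sigma> \<mu>) (Spec \<mu>) (SP \<mu>)"
    and "\<rho> \<in> carrier_mat d d" and "\<forall>j\<in>{1..k}. linear_op_map d (E j)"
    and \<mu>: "\<And>j. j \<le> k \<Longrightarrow> \<mu> j < d^2"
  shows "kd_T \<rho> E Spec SP k \<mu> = mtrace (kd_chain \<rho> E (\<lambda>j. \<sigma> (\<mu> j)) k)"
  unfolding kd_T_def kd_right_def
proof (rule multilinear_form_sum_PiE[OF _ multilinear_form_mtrace_kd_chain[OF assms(3,4)]])
  fix j b assume "j \<in> {..k}" "b \<in> Spec (\<mu> j)"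
  then show "SP (\<mu> j) b \<in> carrier_mat d d"
    using spec \<mu> unfolding spectral_decomp_def hermitian_def by auto
next
  fix j g assume "j \<in> {..k}" "linear_form d g"
  then show "(\<Sum>b\<in>Spec (\<mu> j). complex_of_real b * g (SP (\<mu> j) b)) = g (\<sigma> (\<mu> j))"
    using spec \<mu> herm_op_basis_carrier[OF basis] by (intro linear_form_spectral_decomp) auto
qed (use herm_op_basis_carrier[OF basis] \<mu> in auto)

lemma kd_state_carrier: "kd_state d \<sigma> \<rho> E Spec SP k \<in> carrier_mat (d ^ Suc k) (d ^ Suc k)"
  by (simp add: kd_state_def)

lemma kd_state_index:
  assumes basis: "herm_op_basis d \<sigma>" and spec: "\<forall>\<mu> < d^2. spectral_decomp d (\<sigma> \<mu>) (Spec \<mu>) (SP \<mu>)"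
    and \<rho>: "\<rho> \<in> carrier_mat d d" and E: "\<forall>j\<in>{1..k}. linear_op_map d (E j)"
    and IJ: "I < d ^ Suc k" "J < d ^ Suc k"
  shows "kd_state d \<sigma> \<rho> E Spec SP k $$ (I, J)
    = mtrace (kd_chain \<rho> E (\<lambda>j. ket_bra d (digit d j J) (digit d j I)) k)"
proof -
  have d0: "0 < d" using IJ by (cases d) auto
  let ?G = "\<lambda>X. mtrace (kd_chain \<rho> E X k)"
  let ?c = "\<lambda>j \<nu>. \<sigma> \<nu> $$ (digit d j I, digit d j J) / of_nat d"
  have "(\<Sum>\<mu>\<in>PiE {..k} (\<lambda>_. {..<d^2}). kd_T \<rho> E Spec SP k \<mu> * tens k (\<lambda>j. \<sigma> (\<mu> j)) $$ (I, J))
      = of_nat d ^ Suc k * (\<Sum>\<mu>\<in>PiE {..k} (\<lambda>_. {..<d^2}). (\<Prod>j\<le>k. ?c j (\<mu> j)) * ?G (\<lambda>j. \<sigma> (\<mu> j)))"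
    unfolding sum_distrib_left
  proof (intro sum.cong refl)
    fix \<mu> assume "\<mu> \<in> PiE {..k} (\<lambda>_. {..<d^2})"
    then have \<mu>: "\<And>j. j \<le> k \<Longrightarrow> \<mu> j < d^2" by auto
    have "(\<Prod>j\<le>k. \<sigma> (\<mu> j) $$ (digit d j I, digit d j J)) = of_nat d ^ Suc k * (\<Prod>j\<le>k. ?c j (\<mu> j))"
      using d0 by (simp add: prod_dividef del: power_Suc)
    moreover have "kd_T \<rho> E Spec SP k \<mu> = ?G (\<lambda>j. \<sigma> (\<mu> j))"
      using \<mu> by (rule kd_T_eq_mtrace_kd_chain[OF basis spec \<rho> E])
    moreover have "tens k (\<lambda>j. \<sigma> (\<mu> j)) $$ (I, J) = (\<Prod>j\<le>k. \<sigma> (\<mu> j) $$ (digit d j I, digit d j J))"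
      using IJ \<mu> herm_op_basis_carrier[OF basis] by (intro index_tens) auto
    ultimately show "kd_T \<rho> E Spec SP k \<mu> * tens k (\<lambda>j. \<sigma> (\<mu> j)) $$ (I, J)
        = of_nat d ^ Suc k * ((\<Prod>j\<le>k. ?c j (\<mu> j)) * ?G (\<lambda>j. \<sigma> (\<mu> j)))"
      by (simp only: mult_ac)
  qed
  also have "(\<Sum>\<mu>\<in>PiE {..k} (\<lambda>_. {..<d^2}). (\<Prod>j\<le>k. ?c j (\<mu> j)) * ?G (\<lambda>j. \<sigma> (\<mu> j)))
      = ?G (\<lambda>j. ket_bra d (digit d j J) (digit d j I))"
  proof (rule multilinear_form_sum_PiE[OF _ multilinear_form_mtrace_kd_chain[OF \<rho> E]])
    fix j g assume "linear_form d g"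
    then show "(\<Sum>\<nu><d^2. ?c j \<nu> * g (\<sigma> \<nu>)) = g (ket_bra d (digit d j J) (digit d j I))"
      using d0 by (intro linear_form_herm_op_basis[OF basis]) (auto simp: digit_less)
  qed (use herm_op_basis_carrier[OF basis] in auto)
  finally show ?thesis
    using IJ d0 unfolding kd_state_def by simp
qed

lemma kd_state_0:
  assumes "herm_op_basis d \<sigma>" "\<forall>\<mu> < d^2. spectral_decomp d (\<sigma> \<mu>) (Spec \<mu>) (SP \<mu>)"
    and \<rho>: "\<rho> \<in> carrier_mat d d"
  shows "kd_state d \<sigma> \<rho> E Spec SP 0 = \<rho>"
proof (rule eq_matI)
  fix i j assume "i < dim_row \<rho>" "j < dim_col \<rho>"
  then have ij: "i < d" "j < d" using \<rho> by auto
  then have "kd_state d \<sigma> \<rho> E Spec SP 0 $$ (i, j) = mtrace (\<rho> * ket_bra d j i)"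
    using kd_state_index[OF assms, of 0 E i j] by (simp add: digit_def)
  also have "\<dots> = \<rho> $$ (i, j)" by (rule mtrace_mult_ket_bra[OF \<rho> ij(2,1)])
  finally show "kd_state d \<sigma> \<rho> E Spec SP 0 $$ (i, j) = \<rho> $$ (i, j)" .
qed (use \<rho> in \<open>auto simp: kd_state_def\<close>)

lemma kd_state_index_kd_pre:
  assumes basis: "herm_op_basis d \<sigma>" and spec: "\<forall>\<mu> < d^2. spectral_decomp d (\<sigma> \<mu>) (Spec \<mu>) (SP \<mu>)"
    and \<rho>: "\<rho> \<in> carrier_mat d d" and E: "\<forall>j\<in>{1..m}. linear_op_map d (E j)" and l: "l < d"
  shows "kd_state d \<sigma> \<rho> E Spec SP m $$ (l * d ^ m + I mod d ^ m, K mod d ^ Suc m)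
    = kd_pre \<rho> E (\<lambda>j. ket_bra d (digit d j K) (digit d j I)) m $$ (l, digit d m K)"
proof -
  have d0: "0 < d" using l by simp
  let ?X = "\<lambda>j. ket_bra d (digit d j K) (digit d j I)"
  let ?Y = "\<lambda>j. ket_bra d (digit d j (K mod d ^ Suc m)) (digit d j (l * d ^ m + I mod d ^ m))"
  have I': "I mod d ^ m < d ^ m" using d0 by simp
  have "l * d ^ m + I mod d ^ m < d ^ Suc m"
    using add_mult_less_mult[OF l I'] by (simp add: mult.commute)
  then have "kd_state d \<sigma> \<rho> E Spec SP m $$ (l * d ^ m + I mod d ^ m, K mod d ^ Suc m)
      = mtrace (kd_pre \<rho> E ?Y m * ?Y m)"
    using d0 by (simp add: kd_state_index[OF basis spec \<rho> E] kd_chain_eq_kd_pre)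
  also have "kd_pre \<rho> E ?Y m = kd_pre \<rho> E ?X m"
    using d0 I' by (intro kd_pre_cong) (simp add: digit_mod_power digit_add_mult_power del: power_Suc)
  also have "?Y m = ket_bra d (digit d m K) l"
    using d0 I' l by (simp add: digit_mod_power digit_add_mult_power_top del: power_Suc)
  also have "mtrace (kd_pre \<rho> E ?X m * ket_bra d (digit d m K) l) = kd_pre \<rho> E ?X m $$ (l, digit d m K)"
    using \<rho> E d0 l by (intro mtrace_mult_ket_bra kd_pre_carrier) (auto simp: digit_less)
  finally show ?thesis .
qed

section \<open>The Jamiolkowski operator and the star product\<close>

lemma jamiolkowski_carrier: "jamiolkowski d F \<in> carrier_mat (d * d) (d * d)"
  by (simp add: jamiolkowski_def)

lemma jamiolkowski_index:
  assumes F: "linear_op_map d F" and xy: "x < d * d" "y < d * d"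
  shows "jamiolkowski d F $$ (x, y) = F (ket_bra d (y mod d) (x mod d)) $$ (x div d, y div d)"
proof -
  have d0: "0 < d" using xy by (cases d) auto
  have "F (ket_bra d k l) \<in> carrier_mat d d" for k l
    using F unfolding linear_op_map_def by auto
  then have dim: "dim_row (F (ket_bra d k l)) = d" "dim_col (F (ket_bra d k l)) = d" for k l
    by auto
  have "jamiolkowski d F $$ (x, y)
      = (\<Sum>k<d. \<Sum>l<d. F (ket_bra d k l) $$ (x div d, y div d) * ket_bra d l k $$ (x mod d, y mod d))"
    using xy by (simp add: jamiolkowski_def index_kron dim)
  also have "\<dots> = (\<Sum>k<d. if k = y mod d then F (ket_bra d k (x mod d)) $$ (x div d, y div d) else 0)"
  proof (intro sum.cong refl)
    fix k
    have "(\<Sum>l<d. F (ket_bra d k l) $$ (x div d, y div d) * ket_bra d l k $$ (x mod d, y mod d))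
        = (\<Sum>l<d. if l = x mod d then (if k = y mod d then F (ket_bra d k l) $$ (x div d, y div d) else 0) else 0)"
      using d0 by (intro sum.cong refl) auto
    then show "(\<Sum>l<d. F (ket_bra d k l) $$ (x div d, y div d) * ket_bra d l k $$ (x mod d, y mod d))
        = (if k = y mod d then F (ket_bra d k (x mod d)) $$ (x div d, y div d) else 0)"
      using d0 by simp
  qed
  also have "\<dots> = F (ket_bra d (y mod d) (x mod d)) $$ (x div d, y div d)"
    using d0 by simp
  finally show ?thesis .
qed

lemma star_carrier:
  assumes "N \<in> carrier_mat (dC * dB) (dC * dB)" and "M \<in> carrier_mat (dB * dA) (dB * dA)"
  shows "star dB N M \<in> carrier_mat (dC * (dB * dA)) (dC * (dB * dA))"
  using assms by (cases "dB = 0") (auto simp: star_def kron_def)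

lemma star_index:
  assumes N: "N \<in> carrier_mat (dC * dB) (dC * dB)" and M: "M \<in> carrier_mat (dB * dA) (dB * dA)"
    and "0 < dB" and IK: "I < dC * (dB * dA)" "K < dC * (dB * dA)"
  shows "star dB N M $$ (I, K)
    = (\<Sum>l<dB. N $$ (I div dA, K div (dB * dA) * dB + l) * M $$ (l * dA + I mod dA, K mod (dB * dA)))"
proof -
  have dA: "0 < dA" using IK by (cases dA) auto
  define a0 where "a0 = K div (dB * dA)"
  define t0 where "t0 = I mod dA"
  define X where "X = (\<lambda>l. N $$ (I div dA, a0 * dB + l) * M $$ (l * dA + t0, K mod (dB * dA)))"
  have a0: "a0 < dC" and t0: "t0 < dA"
    using IK dA unfolding a0_def t0_def by (auto simp: less_mult_imp_div_less mult.commute)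
  have star: "star dB N M = kron N (1\<^sub>m dA) * kron (1\<^sub>m dC) M"
    using N M \<open>0 < dB\<close> by (simp add: star_def)
  have K1: "kron N (1\<^sub>m dA) \<in> carrier_mat (dC * dB * dA) (dC * dB * dA)"
    and K2: "kron (1\<^sub>m dC) M \<in> carrier_mat (dC * (dB * dA)) (dC * (dB * dA))"
    using N M by (simp_all add: kron_def)
  let ?f = "\<lambda>L. N $$ (I div dA, L div dA) * (if I mod dA = L mod dA then 1 else 0) *
    ((if L div (dB * dA) = a0 then 1 else 0) * M $$ (L mod (dB * dA), K mod (dB * dA)))"
  have "star dB N M $$ (I, K) = (\<Sum>L<dC * (dB * dA). kron N (1\<^sub>m dA) $$ (I, L) * kron (1\<^sub>m dC) M $$ (L, K))"
    unfolding star using K1 K2 IK by (simp add: scalar_prod_def atLeast0LessThan mult.assoc)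
  also have "\<dots> = (\<Sum>L<dC * (dB * dA). ?f L)"
    using N M IK unfolding a0_def
    by (intro sum.cong refl) (simp add: index_kron_one_right index_kron_one_left mult.assoc)
  also have "\<dots> = (\<Sum>a<dC. \<Sum>l<dB. \<Sum>t<dA. ?f (a * (dB * dA) + (l * dA + t)))"
    by (simp only: sum_lessThan_mult[of _ dC "dB * dA"] sum_lessThan_mult[of _ dB dA])
  also have "\<dots> = (\<Sum>a<dC. \<Sum>l<dB. \<Sum>t<dA. if a = a0 then (if t = t0 then X l else 0) else 0)"
  proof (intro sum.cong refl)
    fix a l t assume "a \<in> {..<dC}" "l \<in> {..<dB}" "t \<in> {..<dA}"
    then have lt: "l * dA + t < dB * dA" and t: "t < dA" by (auto intro: add_mult_less_mult)
    have e: "a * (dB * dA) + (l * dA + t) = (a * dB + l) * dA + t" by (simp add: algebra_simps)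
    have "(a * (dB * dA) + (l * dA + t)) div dA = a * dB + l"
      and "(a * (dB * dA) + (l * dA + t)) mod dA = t"
      unfolding e using t by simp_all
    moreover have "(a * (dB * dA) + (l * dA + t)) div (dB * dA) = a"
      and "(a * (dB * dA) + (l * dA + t)) mod (dB * dA) = l * dA + t"
      using lt dA \<open>0 < dB\<close> by simp_all
    ultimately show "?f (a * (dB * dA) + (l * dA + t)) = (if a = a0 then (if t = t0 then X l else 0) else 0)"
      unfolding X_def t0_def by (simp only:) auto
  qed
  also have "\<dots> = (\<Sum>a<dC. if a = a0 then (\<Sum>l<dB. X l) else 0)"
    using t0 by (intro sum.cong refl) (cases "a = a0", simp_all)
  also have "\<dots> = (\<Sum>l<dB. X l)"
    using a0 by simp
  finally show ?thesis unfolding X_def a0_def t0_def .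
qed

lemma kd_state_Suc_index:
  assumes basis: "herm_op_basis d \<sigma>" and spec: "\<forall>\<mu> < d^2. spectral_decomp d (\<sigma> \<mu>) (Spec \<mu>) (SP \<mu>)"
    and \<rho>: "\<rho> \<in> carrier_mat d d" and E: "\<forall>j\<in>{1..Suc m}. linear_op_map d (E j)"
    and IK: "I < d * (d * D)" "K < d * (d * D)" and D: "D = d ^ m"
  shows "kd_state d \<sigma> \<rho> E Spec SP (Suc m) $$ (I, K)
    = (\<Sum>l<d. jamiolkowski d (E (Suc m)) $$ (I div D, K div (d * D) * d + l)
        * kd_state d \<sigma> \<rho> E Spec SP m $$ (l * D + I mod D, K mod (d * D)))"
proof -
  let ?X = "\<lambda>j. ket_bra d (digit d j K) (digit d j I)"
  have d0: "0 < d" using IK by (cases d) auto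
  have Em: "\<forall>j\<in>{1..m}. linear_op_map d (E j)" and F: "linear_op_map d (E (Suc m))" using E by auto
  have IK': "I < d ^ Suc (Suc m)" "K < d ^ Suc (Suc m)" using IK D by simp_all
  have "I div D div d = I div d ^ Suc m" by (simp only: D power_Suc2 div_mult2_eq)
  then have Isucc: "I div D div d = digit d (Suc m) I" using digit_top[OF IK'(1)] by simp
  have Ksucc: "K div (d * D) = digit d (Suc m) K" using digit_top[OF IK'(2)] by (simp add: D)
  have Im: "I div D mod d = digit d m I" by (simp add: D digit_def)
  have Km: "K div (d * D) < d" using Ksucc d0 by (simp add: digit_less)
  have "kd_state d \<sigma> \<rho> E Spec SP (Suc m) $$ (I, K) = mtrace (kd_chain \<rho> E ?X (Suc m))"
    using IK' by (rule kd_state_index[OF basis spec \<rho> E])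
  also have "\<dots> = (\<Sum>l<d. kd_pre \<rho> E ?X m $$ (l, digit d m K)
      * E (Suc m) (ket_bra d l (digit d m I)) $$ (digit d (Suc m) I, digit d (Suc m) K))"
    by (rule mtrace_kd_chain_Suc_ket_bra) (use F kd_pre_carrier[OF \<rho> Em, of ?X] d0 in \<open>auto simp: digit_less\<close>)
  also have "\<dots> = (\<Sum>l<d. jamiolkowski d (E (Suc m)) $$ (I div D, K div (d * D) * d + l)
      * kd_state d \<sigma> \<rho> E Spec SP m $$ (l * D + I mod D, K mod (d * D)))"
  proof (intro sum.cong refl)
    fix l assume "l \<in> {..<d}"
    then have l: "l < d" by simp
    have "I div D < d * d" using IK by (simp add: less_mult_imp_div_less mult.assoc)
    moreover have "K div (d * D) * d + l < d * d" using add_mult_less_mult[OF Km l] .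
    ultimately have "jamiolkowski d (E (Suc m)) $$ (I div D, K div (d * D) * d + l)
        = E (Suc m) (ket_bra d l (digit d m I)) $$ (digit d (Suc m) I, digit d (Suc m) K)"
      using l F by (simp add: jamiolkowski_index Isucc Ksucc Im)
    moreover have "kd_state d \<sigma> \<rho> E Spec SP m $$ (l * D + I mod D, K mod (d * D))
        = kd_pre \<rho> E ?X m $$ (l, digit d m K)"
      unfolding D using kd_state_index_kd_pre[OF basis spec \<rho> Em l] by simp
    ultimately show "kd_pre \<rho> E ?X m $$ (l, digit d m K)
        * E (Suc m) (ket_bra d l (digit d m I)) $$ (digit d (Suc m) I, digit d (Suc m) K)
      = jamiolkowski d (E (Suc m)) $$ (I div D, K div (d * D) * d + l)
        * kd_state d \<sigma> \<rho> E Spec SP m $$ (l * D + I mod D, K mod (d * D))"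
      by simp
  qed
  finally show ?thesis .
qed

lemma kd_state_Suc:
  assumes basis: "herm_op_basis d \<sigma>" and spec: "\<forall>\<mu> < d^2. spectral_decomp d (\<sigma> \<mu>) (Spec \<mu>) (SP \<mu>)"
    and \<rho>: "\<rho> \<in> carrier_mat d d" and E: "\<forall>j\<in>{1..Suc m}. linear_op_map d (E j)"
  shows "kd_state d \<sigma> \<rho> E Spec SP (Suc m)
    = star d (jamiolkowski d (E (Suc m))) (kd_state d \<sigma> \<rho> E Spec SP m)" (is "?L = ?R")
proof (rule eq_matI)
  have U: "kd_state d \<sigma> \<rho> E Spec SP m \<in> carrier_mat (d * d ^ m) (d * d ^ m)"
    using kd_state_carrier by simp
  note S = star_carrier[OF jamiolkowski_carrier[of d "E (Suc m)"] U]
  then show "dim_row ?L = dim_row ?R" and "dim_col ?L = dim_col ?R"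
    using kd_state_carrier[of d \<sigma> \<rho> E Spec SP "Suc m"] by auto
  fix I K assume "I < dim_row ?R" "K < dim_col ?R"
  then have IK: "I < d * (d * d ^ m)" "K < d * (d * d ^ m)" using S by auto
  then have "0 < d" by (cases d) auto
  with IK show "?L $$ (I, K) = ?R $$ (I, K)"
    by (simp add: kd_state_Suc_index[OF basis spec \<rho> E IK refl] star_index[OF jamiolkowski_carrier U])
qed

theorem theorem4:
  fixes d n :: nat
    and \<rho> :: "complex mat"
    and E :: "nat \<Rightarrow> complex mat \<Rightarrow> complex mat"
    and \<sigma> :: "nat \<Rightarrow> complex mat"
    and Spec :: "nat \<Rightarrow> real set"
    and SP :: "nat \<Rightarrow> real \<Rightarrow> complex mat"
  assumes rho: "density_op d \<rho>"
    and chans: "\<forall>j. 1 \<le> j \<and> j \<le> n \<longrightarrow> cptp d (E j)"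
    and basis: "herm_op_basis d \<sigma>"
    and spec: "\<forall>\<mu> < d^2. spectral_decomp d (\<sigma> \<mu>) (Spec \<mu>) (SP \<mu>)"
  shows "kd_state d \<sigma> \<rho> E Spec SP 0 = \<rho> \<and>
         (\<forall>k. 1 \<le> k \<and> k \<le> n \<longrightarrow>
            kd_state d \<sigma> \<rho> E Spec SP k
              = star d (jamiolkowski d (E k)) (kd_state d \<sigma> \<rho> E Spec SP (k - 1)))"
proof (intro conjI allI impI)
  have \<rho>: "\<rho> \<in> carrier_mat d d" using rho unfolding density_op_def psd_def by simp
  then show "kd_state d \<sigma> \<rho> E Spec SP 0 = \<rho>" by (rule kd_state_0[OF basis spec])
  fix k assume k: "1 \<le> k \<and> k \<le> n"
  then obtain m where m: "k = Suc m" by (cases k) auto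
  have "\<forall>j\<in>{1..Suc m}. linear_op_map d (E j)" using chans k m unfolding cptp_def by auto
  then show "kd_state d \<sigma> \<rho> E Spec SP k
      = star d (jamiolkowski d (E k)) (kd_state d \<sigma> \<rho> E Spec SP (k - 1))"
    unfolding m using kd_state_Suc[OF basis spec \<rho>] by simp
qed

end
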